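(* Let $P$ be a finite poset. For every $f\in\mathcal O(P)$ we have $\alpha_2(f)\in\mathcal C(P)$, $\alpha_3(\alpha_2(f))\in\tilde{\mathcal O}(P)$, and $$\rho_{\mathcal P}(f)=\alpha_1\bigl(\alpha_3(\alpha_2(f))\bigr),$$ i.e. $\rho_{\mathcal P}=\alpha_1\circ\alpha_3\circ\alpha_2$ on $\mathcal O(P)$.
   Context: For a finite poset $P$, let $\widehat P=P\cup\{\hat0,\hat1\}$ with $\hat0<x<\hat1$ for all $x\in P$, and write $y\lessdot x$ ($x$ covers $y$) when $y<x$ and no $z$ satisfies $y<z<x$. The order polytope $\mathcal O(P)$ is the set of order-preserving maps $f:P\to[0,1]$; each such $f$ is extended to $\hat f$ on $\widehat P$ by $\hat f(\hat0)=0$, $\hat f(\hat1)=1$. For $x\in P$ the piecewise-linear toggle $\tau_x:\mathcal O(P)\to\mathcal O(P)$ leaves $f(y)$ unchanged for $y\neq x$ and sets $(\tau_xf)(x)=\max\{\hat f(y):y\in\widehat P,\ y\lessdot x\}+\min\{\hat f(y):y\in\widehat P,\ y\gtrdot x\}-f(x)$. Piecewise-linear rowmotion is $\rho_{\mathcal P}=\tau_{x_1}\circ\cdots\circ\tau_{x_p}$ for any linear extension $x_1,\dots,x_p$ of $P$. The chain polytope $\mathcal C(P)$ is the set of maps $g:P\to[0,1]$ with $\sum_{x\in C}g(x)\le 1$ for every chain $C\subseteq P$. $\tilde{\mathcal O}(P)$ is the set of order-reversing maps $P\to[0,1]$. Define: $(\alpha_1 h)(x)=1-h(x)$ for $h\in\tilde{\mathcal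 O}(P)$; $(\alpha_2 f)(x)=\min\{\hat f(x)-\hat f(y): y\in\widehat P,\ y\lessdot x\}$ for $f\in\mathcal O(P)$; and $(\alpha_3 g)(x)=\max\{g(y_1)+\cdots+g(y_k): x=y_1\lessdot y_2\lessdot\cdots\lessdot y_k\lessdot\hat1,\ y_1,\dots,y_k\in P\}$ for $g\in\mathcal C(P)$. *)

theory Defs
  imports Complex_Main
begin

definition finite_poset :: "'a set \<Rightarrow> ('a \<Rightarrow> 'a \<Rightarrow> bool) \<Rightarrow> bool" where
  "finite_poset P le \<longleftrightarrow> finite P
     \<and> (\<forall>x\<in>P. le x x)
     \<and> (\<forall>x\<in>P. \<forall>y\<in>P. le x y \<and> le y x \<longrightarrow> x = y)
     \<and> (\<forall>x\<in>P. \<forall>y\<in>P. \<forall>z\<in>P. le x y \<and> le y z \<longrightarrow> le x z)"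

text \<open>The bounded extension hat P = P with a new bottom Zero and a new top One.\<close>
datatype 'a hatp = Zero | El 'a | One

definition hat_set :: "'a set \<Rightarrow> 'a hatp set" where
  "hat_set P = {Zero, One} \<union> El ` P"

fun hat_le :: "('a \<Rightarrow> 'a \<Rightarrow> bool) \<Rightarrow> 'a hatp \<Rightarrow> 'a hatp \<Rightarrow> bool" where
  "hat_le le Zero b = True"
| "hat_le le (El a) Zero = False"
| "hat_le le (El a) (El b) = le a b"
| "hat_le le (El a) One = True"
| "hat_le le One b = (b = One)"

definition hat_lt :: "('a \<Rightarrow> 'a \<Rightarrow> bool) \<Rightarrow> 'a hatp \<Rightarrow> 'a hatp \<Rightarrow> bool" where
  "hat_lt le a b \<longleftrightarrow> hat_le le a b \<and> a \<noteq> b"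

text \<open>hat_cov P le y x: x covers y in hat P.\<close>
definition hat_cov :: "'a set \<Rightarrow> ('a \<Rightarrow> 'a \<Rightarrow> bool) \<Rightarrow> 'a hatp \<Rightarrow> 'a hatp \<Rightarrow> bool" where
  "hat_cov P le y x \<longleftrightarrow> y \<in> hat_set P \<and> x \<in> hat_set P \<and> hat_lt le y x
      \<and> \<not> (\<exists>z\<in>hat_set P. hat_lt le y z \<and> hat_lt le z x)"

fun hatf :: "('a \<Rightarrow> real) \<Rightarrow> 'a hatp \<Rightarrow> real" where
  "hatf f Zero = 0"
| "hatf f (El a) = f a"
| "hatf f One = 1"

definition order_polytope :: "'a set \<Rightarrow> ('a \<Rightarrow> 'a \<Rightarrow> bool) \<Rightarrow> ('a \<Rightarrow> real) set" where
  "order_polytope P le = {f. (\<forall>x\<in>P. 0 \<le> f x \<and> f x \<le> 1)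
      \<and> (\<forall>x\<in>P. \<forall>y\<in>P. le x y \<longrightarrow> f x \<le> f y)}"

definition rev_order_polytope :: "'a set \<Rightarrow> ('a \<Rightarrow> 'a \<Rightarrow> bool) \<Rightarrow> ('a \<Rightarrow> real) set" where
  "rev_order_polytope P le = {f. (\<forall>x\<in>P. 0 \<le> f x \<and> f x \<le> 1)
      \<and> (\<forall>x\<in>P. \<forall>y\<in>P. le x y \<longrightarrow> f y \<le> f x)}"

definition is_chain :: "('a \<Rightarrow> 'a \<Rightarrow> bool) \<Rightarrow> 'a set \<Rightarrow> bool" where
  "is_chain le C \<longleftrightarrow> (\<forall>a\<in>C. \<forall>b\<in>C. le a b \<or> le b a)"

definition chain_polytope :: "'a set \<Rightarrow> ('a \<Rightarrow> 'a \<Rightarrow> bool) \<Rightarrow> ('a \<Rightarrow> real) set" where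
  "chain_polytope P le = {g. (\<forall>x\<in>P. 0 \<le> g x \<and> g x \<le> 1)
      \<and> (\<forall>C. C \<subseteq> P \<and> is_chain le C \<longrightarrow> sum g C \<le> 1)}"

definition toggle :: "'a set \<Rightarrow> ('a \<Rightarrow> 'a \<Rightarrow> bool) \<Rightarrow> 'a \<Rightarrow> ('a \<Rightarrow> real) \<Rightarrow> ('a \<Rightarrow> real)" where
  "toggle P le x f = f(x := Max {hatf f y | y. hat_cov P le y (El x)}
                          + Min {hatf f y | y. hat_cov P le (El x) y} - f x)"

definition linear_extension :: "'a set \<Rightarrow> ('a \<Rightarrow> 'a \<Rightarrow> bool) \<Rightarrow> 'a list \<Rightarrow> bool" where
  "linear_extension P le xs \<longleftrightarrow> distinct xs \<and> set xs = P
     \<and> (\<forall>i<length xs. \<forall>j<length xs. le (xs ! i) (xs ! j) \<longrightarrow> i \<le> j)"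

definition pl_rowmotion :: "'a set \<Rightarrow> ('a \<Rightarrow> 'a \<Rightarrow> bool) \<Rightarrow> 'a list \<Rightarrow> ('a \<Rightarrow> real) \<Rightarrow> ('a \<Rightarrow> real)" where
  "pl_rowmotion P le xs f = foldr (toggle P le) xs f"

definition alpha1 :: "('a \<Rightarrow> real) \<Rightarrow> ('a \<Rightarrow> real)" where
  "alpha1 h = (\<lambda>x. 1 - h x)"

definition alpha2 :: "'a set \<Rightarrow> ('a \<Rightarrow> 'a \<Rightarrow> bool) \<Rightarrow> ('a \<Rightarrow> real) \<Rightarrow> ('a \<Rightarrow> real)" where
  "alpha2 P le f = (\<lambda>x. Min {hatf f (El x) - hatf f y | y. hat_cov P le y (El x)})"

definition sat_chains_to_top :: "'a set \<Rightarrow> ('a \<Rightarrow> 'a \<Rightarrow> bool) \<Rightarrow> 'a \<Rightarrow> 'a list set" where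
  "sat_chains_to_top P le x = {ys. ys \<noteq> [] \<and> hd ys = x \<and> set ys \<subseteq> P
      \<and> (\<forall>i. Suc i < length ys \<longrightarrow> hat_cov P le (El (ys ! i)) (El (ys ! Suc i)))
      \<and> hat_cov P le (El (last ys)) One}"

definition alpha3 :: "'a set \<Rightarrow> ('a \<Rightarrow> 'a \<Rightarrow> bool) \<Rightarrow> ('a \<Rightarrow> real) \<Rightarrow> ('a \<Rightarrow> real)" where
  "alpha3 P le g = (\<lambda>x. Max {sum_list (map g ys) | ys. ys \<in> sat_chains_to_top P le x})"

end

theory Submission
  imports Defs
begin

(* Write g = alpha2 f and A = alpha3 g.  The proof rests on two recursions,
   both running downwards from the top of the poset:

   (1) A satisfies the "longest path" recursion
         A x = g x + max { A z : x <. z },   with A(One) read as 0,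
       because every saturated chain from x to One is x followed by a
       saturated chain from an upper cover of x.
   (2) Toggling along a linear extension from the top down, the toggle at x
       sees the ORIGINAL values of f at the lower covers of x and the
       ALREADY ROWMOTED values at the upper covers of x, so
         rho f x = max { f y : y <. x } + min { rho f z : x <. z } - f x.

   Since g x = f x - max { f y : y <. x }, substituting 1 - A z for rho f z
   in (2) gives exactly 1 - A x by (1); induction from the top proves the
   identity.  The membership claims are proved separately: the sum of g
   over a chain telescopes below the value of f at an upper bound of it,
   so g lies in the chain polytope, and then (1) shows that A is
   order-reversing with values in [0,1]. *)


lemma hat_set_simps [simp]:
  "Zero \<in> hat_set P" "One \<in> hat_set P" "El x \<in> hat_set P \<longleftrightarrow> x \<in> P"
  by (auto simp: hat_set_def)

lemma finite_hat_set: "finite P \<Longrightarrow> finite (hat_set P)"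
  by (simp add: hat_set_def)

text \<open>Minimum of a reflected family; this converts the minimum defining
  alpha2 and the maximum in recursion (1) into each other.\<close>
lemma Min_const_minus:
  fixes h :: "'b \<Rightarrow> real"
  assumes "finite Y" "Y \<noteq> {}"
  shows "Min ((\<lambda>y. c - h y) ` Y) = c - Max (h ` Y)"
proof -
  have "Min ((\<lambda>y. - h y + c) ` Y) = Min ((\<lambda>y. - h y) ` Y) + c"
    using assms by (rule Min_add_commute)
  also have "Min ((\<lambda>y. - h y) ` Y) = - Max (h ` Y)"
    using assms by (simp add: image_image)
  finally show ?thesis by simp
qed

lemma Max_const_minus:
  fixes h :: "'b \<Rightarrow> real"
  assumes "finite Y" "Y \<noteq> {}"
  shows "Max ((\<lambda>y. c - h y) ` Y) = c - Min (h ` Y)"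
proof -
  have "Max ((\<lambda>y. - h y + c) ` Y) = Max ((\<lambda>y. - h y) ` Y) + c"
    using assms by (rule Max_add_commute)
  also have "Max ((\<lambda>y. - h y) ` Y) = - Min (h ` Y)"
    using assms by (simp add: image_image)
  finally show ?thesis by simp
qed

text \<open>Extension of a function on P by 0 at both adjoined elements; this is
  how the value at One enters recursion (1).\<close>
fun hat0 :: "('a \<Rightarrow> real) \<Rightarrow> 'a hatp \<Rightarrow> real" where
  "hat0 A (El z) = A z"
| "hat0 A Zero = 0"
| "hat0 A One = 0"

lemma foldr_toggle_other:
  "y \<notin> set ys \<Longrightarrow> foldr (toggle P le) ys h y = h y"
  by (induction ys) (auto simp: toggle_def)


lemma all_nat_Suc_split: "(\<forall>i::nat. Q i) \<longleftrightarrow> Q 0 \<and> (\<forall>i. Q (Suc i))"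
  by (metis not0_implies_Suc)

lemma sat_chain_single:
  "[y] \<in> sat_chains_to_top P le x \<longleftrightarrow> y = x \<and> x \<in> P \<and> hat_cov P le (El x) One"
  by (auto simp: sat_chains_to_top_def)

lemma sat_chain_cons:
  "y # z # zs \<in> sat_chains_to_top P le x \<longleftrightarrow>
     y = x \<and> x \<in> P \<and> hat_cov P le (El x) (El z) \<and> z # zs \<in> sat_chains_to_top P le z"
  unfolding sat_chains_to_top_def by (subst all_nat_Suc_split) auto

lemma sat_chain_hd:
  assumes "ys \<in> sat_chains_to_top P le z"
  obtains zs where "ys = z # zs"
  using assms that by (cases ys) (auto simp: sat_chains_to_top_def)


section \<open>The bounded poset hat P\<close>

locale fin_poset =
  fixes P :: "'a set" and le :: "'a \<Rightarrow> 'a \<Rightarrow> bool"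
  assumes poset: "finite_poset P le"
begin

abbreviation "H \<equiv> hat_set P"

lemma finite_P: "finite P" using poset by (simp add: finite_poset_def)
lemma poset_refl: "x \<in> P \<Longrightarrow> le x x" using poset by (simp add: finite_poset_def)
lemma poset_antisym: "x \<in> P \<Longrightarrow> y \<in> P \<Longrightarrow> le x y \<Longrightarrow> le y x \<Longrightarrow> x = y"
  using poset unfolding finite_poset_def by blast
lemma poset_trans: "x \<in> P \<Longrightarrow> y \<in> P \<Longrightarrow> z \<in> P \<Longrightarrow> le x y \<Longrightarrow> le y z \<Longrightarrow> le x z"
  using poset unfolding finite_poset_def by blast

lemma finite_H: "finite H" using finite_P by (rule finite_hat_set)

lemma hat_le_refl: "a \<in> H \<Longrightarrow> hat_le le a a"
  by (cases a) (auto simp: poset_refl)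
lemma hat_le_trans:
  "a \<in> H \<Longrightarrow> b \<in> H \<Longrightarrow> c \<in> H \<Longrightarrow> hat_le le a b \<Longrightarrow> hat_le le b c \<Longrightarrow> hat_le le a c"
  by (cases a; cases b; cases c) (auto intro: poset_trans)
lemma hat_le_antisym: "a \<in> H \<Longrightarrow> b \<in> H \<Longrightarrow> hat_le le a b \<Longrightarrow> hat_le le b a \<Longrightarrow> a = b"
  by (cases a; cases b) (auto intro: poset_antisym)
lemma hat_lt_trans:
  "a \<in> H \<Longrightarrow> b \<in> H \<Longrightarrow> c \<in> H \<Longrightarrow> hat_lt le a b \<Longrightarrow> hat_lt le b c \<Longrightarrow> hat_lt le a c"
  unfolding hat_lt_def by (metis hat_le_trans hat_le_antisym)

lemma cover_in_H: "hat_cov P le a b \<Longrightarrow> a \<in> H \<and> b \<in> H \<and> hat_lt le a b"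
  by (simp add: hat_cov_def)

text \<open>The strict order of hat P as a relation; being finite and acyclic it is
  well-founded in both directions, which yields minimal and maximal elements
  and induction from the top.\<close>
definition hat_less :: "('a hatp \<times> 'a hatp) set" where
  "hat_less = {(a, b). a \<in> H \<and> b \<in> H \<and> hat_lt le a b}"

lemma finite_acyclic_hat_less: "finite hat_less \<and> acyclic hat_less"
proof
  show "finite hat_less"
    by (rule finite_subset[of _ "H \<times> H"]) (auto simp: hat_less_def finite_H)
  have "trans hat_less"
    by (rule transI) (auto simp: hat_less_def intro: hat_lt_trans)
  then show "acyclic hat_less"
    by (simp add: acyclic_def hat_less_def hat_lt_def)
qed

lemma wf_hat_less: "wf hat_less"
  using finite_acyclic_hat_less by (blast intro: finite_acyclic_wf)

lemma wf_hat_greater: "wf (hat_less\<inverse>)"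
  using finite_acyclic_hat_less by (blast intro: finite_acyclic_wf_converse)

lemma cover_up:
  assumes "a \<in> H" "b \<in> H" "hat_lt le a b"
  obtains c where "hat_cov P le a c" "hat_le le c b"
proof -
  let ?S = "{c\<in>H. hat_lt le a c \<and> hat_le le c b}"
  have "b \<in> ?S" using assms hat_le_refl by auto
  then obtain m where m: "m \<in> ?S" and min: "\<And>d. (d, m) \<in> hat_less \<Longrightarrow> d \<notin> ?S"
    by (rule wfE_min[OF wf_hat_less]) blast
  have "\<not> hat_lt le a z \<or> \<not> hat_lt le z m" if "z \<in> H" for z
    using min[of z] m that hat_le_trans[of z m b] assms by (auto simp: hat_less_def hat_lt_def)
  then have "hat_cov P le a m" using assms m by (auto simp: hat_cov_def)
  then show thesis using m that by blast
qed

lemma cover_down: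
  assumes "a \<in> H" "b \<in> H" "hat_lt le a b"
  obtains c where "hat_le le a c" "hat_cov P le c b"
proof -
  let ?S = "{c\<in>H. hat_le le a c \<and> hat_lt le c b}"
  have "a \<in> ?S" using assms hat_le_refl by auto
  then obtain m where m: "m \<in> ?S" and max: "\<And>d. (d, m) \<in> hat_less\<inverse> \<Longrightarrow> d \<notin> ?S"
    by (rule wfE_min[OF wf_hat_greater]) blast
  have "\<not> hat_lt le m z \<or> \<not> hat_lt le z b" if "z \<in> H" for z
    using max[of z] m that hat_le_trans[of a m z] assms by (auto simp: hat_less_def hat_lt_def)
  then have "hat_cov P le m b" using assms m by (auto simp: hat_cov_def)
  then show thesis using m that by blast
qed

lemma top_down_induct [consumes 1, case_names step]:
  assumes "x \<in> P"
    and step: "\<And>x. x \<in> P \<Longrightarrow> (\<And>z. hat_cov P le (El x) (El z) \<Longrightarrow> Q z) \<Longrightarrow> Q x"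
  shows "Q x"
proof -
  have "\<forall>x. a = El x \<longrightarrow> x \<in> P \<longrightarrow> Q x" for a
    using wf_hat_greater
  proof (induction a rule: wf_induct_rule)
    case (less a)
    show ?case
    proof (intro allI impI)
      fix x assume a: "a = El x" "x \<in> P"
      have "Q z" if "hat_cov P le (El x) (El z)" for z
        using less[of "El z"] that a by (auto simp: hat_cov_def hat_less_def)
      then show "Q x" using step a(2) by blast
    qed
  qed
  then show ?thesis using assms(1) by blast
qed

text \<open>The sets of lower and upper covers of an element of P; both are finite
  and, thanks to Zero and One, nonempty.\<close>
definition lower_covers :: "'a \<Rightarrow> 'a hatp set" where
  "lower_covers x = {y. hat_cov P le y (El x)}"
definition upper_covers :: "'a \<Rightarrow> 'a hatp set" where
  "upper_covers x = {z. hat_cov P le (El x) z}"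

lemma finite_lower_covers: "finite (lower_covers x)"
  by (rule finite_subset[OF _ finite_H]) (auto simp: lower_covers_def hat_cov_def)
lemma finite_upper_covers: "finite (upper_covers x)"
  by (rule finite_subset[OF _ finite_H]) (auto simp: upper_covers_def hat_cov_def)
lemma lower_covers_nonempty: "x \<in> P \<Longrightarrow> lower_covers x \<noteq> {}"
  using cover_down[of Zero "El x"] by (auto simp: lower_covers_def hat_lt_def)
lemma upper_covers_nonempty: "x \<in> P \<Longrightarrow> upper_covers x \<noteq> {}"
  using cover_up[of "El x" One] by (auto simp: upper_covers_def hat_lt_def)

lemma chain_has_max:
  assumes "C \<noteq> {}" "C \<subseteq> P" "is_chain le C"
  obtains m where "m \<in> C" "\<And>c. c \<in> C \<Longrightarrow> le c m"
proof -
  obtain c0 where "c0 \<in> C" using assms(1) by blast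
  then have "El c0 \<in> El ` C" by simp
  then obtain a where a: "a \<in> El ` C" and max: "\<And>d. (d, a) \<in> hat_less\<inverse> \<Longrightarrow> d \<notin> El ` C"
    by (rule wfE_min[OF wf_hat_greater]) blast
  then obtain m where m: "m \<in> C" "a = El m" by blast
  have "le c m" if "c \<in> C" for c
    using max[of "El c"] m that assms(2,3) poset_refl
    by (auto simp: hat_less_def hat_lt_def is_chain_def subset_eq)
  then show thesis using m that by blast
qed

lemma lower_cover_above_chain:
  assumes "m \<in> P" "C \<subseteq> P" "is_chain le C" "\<And>c. c \<in> C \<Longrightarrow> le c m \<and> c \<noteq> m"
  obtains y where "hat_cov P le y (El m)" "\<And>c. c \<in> C \<Longrightarrow> hat_le le (El c) y"
proof -
  obtain b where b: "b \<in> H" "hat_lt le b (El m)" "\<And>c. c \<in> C \<Longrightarrow> hat_le le (El c) b"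
  proof (cases "C = {}")
    case True then show thesis by (intro that[of Zero]) (auto simp: hat_lt_def)
  next
    case False
    then obtain m' where "m' \<in> C" "\<And>c. c \<in> C \<Longrightarrow> le c m'"
      using assms(2,3) chain_has_max by blast
    then show thesis using assms by (intro that[of "El m'"]) (auto simp: hat_lt_def)
  qed
  then obtain y where y: "hat_le le b y" "hat_cov P le y (El m)"
    using cover_down[of b "El m"] assms(1) by auto
  have "hat_le le (El c) y" if "c \<in> C" for c
    using hat_le_trans[of "El c" b y] b y cover_in_H[OF y(2)] that assms(2) by auto
  then show thesis using y(2) that by blast
qed


section \<open>Saturated chains to the top and the recursion for alpha3\<close>

abbreviation "Ch x \<equiv> sat_chains_to_top P le x"

lemma sat_chain_props:
  "ys \<in> Ch x \<Longrightarrow> distinct ys \<and> set ys \<subseteq> P \<and> (\<forall>y\<in>set ys. le x y) \<and> is_chain le (set ys) \<and> x \<in> P"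
proof (induction ys arbitrary: x)
  case Nil then show ?case by (simp add: sat_chains_to_top_def)
next
  case (Cons y zs)
  show ?case
  proof (cases zs)
    case Nil with Cons.prems show ?thesis by (auto simp: sat_chain_single is_chain_def poset_refl)
  next
    case (Cons z zs')
    with Cons.prems have h: "y = x" "x \<in> P" "hat_cov P le (El x) (El z)" "zs \<in> Ch z"
      by (auto simp: sat_chain_cons)
    with Cons.IH have ih: "distinct zs" "set zs \<subseteq> P" "\<forall>w\<in>set zs. le z w"
        "is_chain le (set zs)" "z \<in> P"
      by auto
    from h(3) have xz: "le x z" "x \<noteq> z" by (auto simp: hat_cov_def hat_lt_def)
    have above: "\<forall>w\<in>set zs. le x w" using ih xz h(2) by (auto intro: poset_trans)
    have "x \<notin> set zs" using ih xz h(2) poset_antisym[of x z] by auto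
    moreover have "is_chain le (set (x # zs))"
      using ih(4) above h(2) poset_refl unfolding is_chain_def by auto
    ultimately show ?thesis using h(1,2) ih(1,2) above poset_refl by simp
  qed
qed

lemma finite_sat_chains: "finite (Ch x)"
proof (rule finite_subset)
  show "Ch x \<subseteq> {ys. set ys \<subseteq> P \<and> length ys \<le> card P}"
    using sat_chain_props card_mono[OF finite_P] by (force simp: distinct_card[symmetric])
  show "finite {ys. set ys \<subseteq> P \<and> length ys \<le> card P}"
    by (rule finite_lists_length_le[OF finite_P])
qed

lemma sat_chains_nonempty: "x \<in> P \<Longrightarrow> Ch x \<noteq> {}"
proof (induction x rule: top_down_induct)
  case (step x)
  obtain c where c: "hat_cov P le (El x) c"
    using cover_up[of "El x" One] step(1) by (auto simp: hat_lt_def)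
  show ?case
  proof (cases c)
    case Zero then show ?thesis using cover_in_H[OF c(1)] by (simp add: hat_lt_def)
  next
    case One
    then have "[x] \<in> Ch x" using c step(1) by (simp add: sat_chain_single)
    then show ?thesis by blast
  next
    case (El z)
    then have "Ch z \<noteq> {}" using step(2) c by simp
    then obtain zs where zs: "zs \<in> Ch z" by auto
    then obtain zs' where "zs = z # zs'" by (rule sat_chain_hd)
    then have "x # zs \<in> Ch x" using step(1) c El zs by (simp add: sat_chain_cons)
    then show ?thesis by blast
  qed
qed

definition chain_sums :: "('a \<Rightarrow> real) \<Rightarrow> 'a \<Rightarrow> real set" where
  "chain_sums g x = (\<lambda>ys. sum_list (map g ys)) ` Ch x"

lemma alpha3_eq_Max: "alpha3 P le g x = Max (chain_sums g x)"
  by (simp add: alpha3_def chain_sums_def Setcompr_eq_image)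

lemma finite_chain_sums: "finite (chain_sums g x)"
  by (simp add: chain_sums_def finite_sat_chains)
lemma chain_sums_nonempty: "x \<in> P \<Longrightarrow> chain_sums g x \<noteq> {}"
  by (simp add: chain_sums_def sat_chains_nonempty)

lemma alpha3_in_chain_sums: "x \<in> P \<Longrightarrow> alpha3 P le g x \<in> chain_sums g x"
  unfolding alpha3_eq_Max using finite_chain_sums chain_sums_nonempty by (rule Max_in)

lemma chain_sum_le_alpha3: "zs \<in> Ch z \<Longrightarrow> sum_list (map g zs) \<le> alpha3 P le g z"
  unfolding alpha3_eq_Max chain_sums_def using finite_sat_chains by (intro Max_ge) auto

text \<open>Recursion (1): the best chain from x is x followed by the best chain
  from one of its upper covers (or by nothing, if One covers x).\<close>
lemma alpha3_rec:
  assumes x: "x \<in> P"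
  shows "alpha3 P le g x = g x + Max (hat0 (alpha3 P le g) ` upper_covers x)"
proof -
  let ?A = "alpha3 P le g"
  let ?M = "Max (hat0 ?A ` upper_covers x)"
  have fin: "finite (hat0 ?A ` upper_covers x)" by (simp add: finite_upper_covers)
  have cover_le_M: "hat0 ?A c \<le> ?M" if "hat_cov P le (El x) c" for c
    using fin that by (intro Max_ge) (auto simp: upper_covers_def)
  have "Max (chain_sums g x) = g x + ?M"
  proof (rule Max_eqI[OF finite_chain_sums])
    fix v assume "v \<in> chain_sums g x"
    then obtain ys where ys: "ys \<in> Ch x" "v = sum_list (map g ys)"
      by (auto simp: chain_sums_def)
    obtain zs where zs: "ys = x # zs" using ys(1) by (rule sat_chain_hd)
    show "v \<le> g x + ?M"
    proof (cases zs)
      case Nil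
      then show ?thesis using ys zs cover_le_M[of One] by (simp add: sat_chain_single)
    next
      case (Cons z zs')
      then have "hat_cov P le (El x) (El z)" "zs \<in> Ch z" using ys zs by (auto simp: sat_chain_cons)
      then show ?thesis
        using ys zs cover_le_M[of "El z"] chain_sum_le_alpha3[of zs z g] by simp
    qed
  next
    have "?M \<in> hat0 ?A ` upper_covers x"
      using fin upper_covers_nonempty[OF x] by (intro Max_in) auto
    then obtain c where c: "hat_cov P le (El x) c" "?M = hat0 ?A c"
      by (auto simp: upper_covers_def)
    show "g x + ?M \<in> chain_sums g x"
    proof (cases c)
      case Zero then show ?thesis using cover_in_H[OF c(1)] by (simp add: hat_lt_def)
    next
      case One
      then have "[x] \<in> Ch x" using c x by (simp add: sat_chain_single)
      then show ?thesis using c One by (force simp: chain_sums_def)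
    next
      case (El z)
      then have z: "z \<in> P" using cover_in_H[OF c(1)] by simp
      obtain zs where zs: "zs \<in> Ch z" "?A z = sum_list (map g zs)"
        using alpha3_in_chain_sums[OF z, of g] by (auto simp: chain_sums_def)
      obtain zs' where "zs = z # zs'" using zs(1) by (rule sat_chain_hd)
      then have "x # zs \<in> Ch x" using zs c El x by (simp add: sat_chain_cons)
      moreover have "g x + ?M = sum_list (map g (x # zs))" using c El zs by simp
      ultimately show ?thesis unfolding chain_sums_def by blast
    qed
  qed
  then show ?thesis by (simp add: alpha3_eq_Max)
qed

text \<open>For nonnegative g, recursion (1) makes alpha3 g order-reversing.\<close>
lemma alpha3_antimono:
  assumes g_nonneg: "\<And>x. x \<in> P \<Longrightarrow> 0 \<le> g x"
  shows "x \<in> P \<Longrightarrow> \<forall>y\<in>P. le x y \<longrightarrow> alpha3 P le g y \<le> alpha3 P le g x"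
proof (induction x rule: top_down_induct)
  case (step x)
  show ?case
  proof (intro ballI impI)
    fix y assume y: "y \<in> P" "le x y"
    show "alpha3 P le g y \<le> alpha3 P le g x"
    proof (cases "x = y")
      case False
      then have "hat_lt le (El x) (El y)" using y by (simp add: hat_lt_def)
      then obtain c where c: "hat_cov P le (El x) c" "hat_le le c (El y)"
        using cover_up[of "El x" "El y"] step(1) y by auto
      then obtain z where z: "c = El z" by (cases c) (auto simp: hat_cov_def hat_lt_def)
      have "alpha3 P le g y \<le> alpha3 P le g z" using step(2) c z y cover_in_H by auto
      also have "\<dots> = hat0 (alpha3 P le g) c" using z by simp
      also have "\<dots> \<le> Max (hat0 (alpha3 P le g) ` upper_covers x)"
        using c(1) finite_upper_covers by (intro Max_ge) (auto simp: upper_covers_def)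
      also have "\<dots> \<le> alpha3 P le g x" using alpha3_rec[OF step(1)] g_nonneg step(1) by simp
      finally show ?thesis .
    qed simp
  qed
qed

text \<open>alpha3 maps the chain polytope into the order-reversing maps: a
  saturated chain is a chain, so its g-sum lies in [0,1].\<close>
lemma alpha3_rev_order:
  assumes g: "g \<in> chain_polytope P le"
  shows "alpha3 P le g \<in> rev_order_polytope P le"
proof -
  have g_nonneg: "\<And>x. x \<in> P \<Longrightarrow> 0 \<le> g x" using g by (simp add: chain_polytope_def)
  have "0 \<le> alpha3 P le g x \<and> alpha3 P le g x \<le> 1" if x: "x \<in> P" for x
  proof -
    obtain ys where ys: "ys \<in> Ch x" "alpha3 P le g x = sum_list (map g ys)"
      using alpha3_in_chain_sums[OF x, of g] by (auto simp: chain_sums_def)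
    then have C: "distinct ys" "set ys \<subseteq> P" "is_chain le (set ys)"
      using sat_chain_props by auto
    then have "alpha3 P le g x = sum g (set ys)"
      using ys(2) by (simp add: sum.distinct_set_conv_list)
    moreover have "sum g (set ys) \<le> 1" using g C by (simp add: chain_polytope_def)
    moreover have "0 \<le> sum g (set ys)" using g_nonneg C by (intro sum_nonneg) auto
    ultimately show ?thesis by simp
  qed
  then show ?thesis
    using alpha3_antimono[OF g_nonneg] by (auto simp: rev_order_polytope_def)
qed

end


section \<open>alpha2 maps the order polytope into the chain polytope\<close>

locale order_point = fin_poset +
  fixes f :: "'a \<Rightarrow> real"
  assumes f_order: "f \<in> order_polytope P le"
begin

lemma f_bounds: "x \<in> P \<Longrightarrow> 0 \<le> f x \<and> f x \<le> 1"
  using f_order by (simp add: order_polytope_def)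
lemma f_mono: "x \<in> P \<Longrightarrow> y \<in> P \<Longrightarrow> le x y \<Longrightarrow> f x \<le> f y"
  using f_order by (simp add: order_polytope_def)

lemma hatf_mono: "a \<in> H \<Longrightarrow> b \<in> H \<Longrightarrow> hat_le le a b \<Longrightarrow> hatf f a \<le> hatf f b"
  by (cases a; cases b) (auto simp: f_bounds f_mono)
lemma hatf_nonneg: "a \<in> H \<Longrightarrow> 0 \<le> hatf f a"
  by (cases a) (auto simp: f_bounds)

abbreviation "g \<equiv> alpha2 P le f"

lemma alpha2_eq: "x \<in> P \<Longrightarrow> g x = f x - Max (hatf f ` lower_covers x)"
  unfolding alpha2_def lower_covers_def image_Collect[symmetric]
  using finite_lower_covers lower_covers_nonempty
  by (simp add: Min_const_minus[symmetric] lower_covers_def)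

lemma alpha2_le: "x \<in> P \<Longrightarrow> hat_cov P le y (El x) \<Longrightarrow> g x \<le> f x - hatf f y"
  using alpha2_eq[of x] finite_lower_covers[of x] by (simp add: lower_covers_def)

lemma alpha2_nonneg: "x \<in> P \<Longrightarrow> 0 \<le> g x"
  using alpha2_eq[of x] finite_lower_covers[of x] lower_covers_nonempty[of x]
    hatf_mono[of _ "El x"] cover_in_H
  by (auto simp: lower_covers_def hat_lt_def)

text \<open>The g-sum over a chain telescopes: it is at most the value of f at any
  upper bound T of the chain in hat P.\<close>
lemma alpha2_chain_sum:
  assumes "C \<subseteq> P" "is_chain le C" "T \<in> H" "\<And>c. c \<in> C \<Longrightarrow> hat_le le (El c) T"
  shows "sum g C \<le> hatf f T"
  using assms
proof (induction "card C" arbitrary: C T rule: less_induct)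
  case less
  have finC: "finite C" using less.prems(1) finite_P finite_subset by blast
  show ?case
  proof (cases "C = {}")
    case True then show ?thesis using hatf_nonneg[OF less.prems(3)] by simp
  next
    case False
    then obtain m where m: "m \<in> C" "\<And>c. c \<in> C \<Longrightarrow> le c m"
      using less.prems(1,2) chain_has_max by blast
    have mP: "m \<in> P" using m less.prems(1) by auto
    let ?C' = "C - {m}"
    have C': "?C' \<subseteq> P" "is_chain le ?C'" using less.prems(1,2) by (auto simp: is_chain_def)
    then obtain y where y: "hat_cov P le y (El m)" "\<And>c. c \<in> ?C' \<Longrightarrow> hat_le le (El c) y"
      using lower_cover_above_chain[of m ?C'] mP m(2) by blast
    have "sum g ?C' \<le> hatf f y"
      using less.hyps[of ?C' y] card_Diff1_less[OF finC m(1)] C' y cover_in_H[OF y(1)] by simp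
    then have "sum g C \<le> f m"
      using alpha2_le[OF mP y(1)] finC m(1) by (simp add: sum.remove)
    also have "\<dots> \<le> hatf f T"
      using hatf_mono[of "El m" T] less.prems(3,4) m(1) mP by simp
    finally show ?thesis .
  qed
qed

lemma alpha2_chain_polytope: "g \<in> chain_polytope P le"
proof -
  have "sum g C \<le> 1" if "C \<subseteq> P" "is_chain le C" for C
    using alpha2_chain_sum[OF that, of One] by simp
  moreover have "g x \<le> 1" if "x \<in> P" for x
    using alpha2_chain_sum[of "{x}" One] that poset_refl by (simp add: is_chain_def)
  ultimately show ?thesis using alpha2_nonneg by (simp add: chain_polytope_def)
qed

end


section \<open>Rowmotion along a linear extension\<close>

locale rowmotion = order_point +
  fixes xs :: "'a list"
  assumes lin_ext: "linear_extension P le xs"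
begin

abbreviation "R \<equiv> pl_rowmotion P le xs f"

lemma distinct_xs: "distinct xs" and set_xs: "set xs = P"
  and xs_order: "\<And>i j. i < length xs \<Longrightarrow> j < length xs \<Longrightarrow> le (xs ! i) (xs ! j) \<Longrightarrow> i \<le> j"
  using lin_ext by (auto simp: linear_extension_def)

lemma nth_notin_drop: "j < length xs \<Longrightarrow> j < k \<Longrightarrow> xs ! j \<notin> set (drop k xs)"
  using distinct_xs by (auto simp: in_set_conv_nth nth_eq_iff_index_eq)

lemma nth_notin_take: "j < length xs \<Longrightarrow> k \<le> j \<Longrightarrow> xs ! j \<notin> set (take k xs)"
  using distinct_xs by (auto simp: in_set_conv_nth nth_eq_iff_index_eq)

lemma lower_cover_before:
  assumes i: "i < length xs" and y: "hat_cov P le (El y) (El (xs ! i))"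
  shows "y \<notin> set (drop (Suc i) xs)"
proof -
  have "y \<in> P" "le y (xs ! i)" "y \<noteq> xs ! i" using y by (auto simp: hat_cov_def hat_lt_def)
  then obtain j where "j < length xs" "xs ! j = y" "j < Suc i"
    using set_xs xs_order[OF _ i] by (metis in_set_conv_nth le_imp_less_Suc)
  then show ?thesis using nth_notin_drop by blast
qed

lemma upper_cover_after:
  assumes i: "i < length xs" and z: "hat_cov P le (El (xs ! i)) (El z)"
  shows "z \<notin> set (take (Suc i) xs)"
proof -
  have "z \<in> P" "le (xs ! i) z" "z \<noteq> xs ! i" using z by (auto simp: hat_cov_def hat_lt_def)
  then obtain j where "j < length xs" "xs ! j = z" "Suc i \<le> j"
    using set_xs xs_order[OF i] by (metis in_set_conv_nth le_neq_implies_less Suc_leI)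
  then show ?thesis using nth_notin_take by blast
qed

text \<open>Recursion (2): the toggle at xs ! i is applied after the toggles at the
  later positions and before those at the earlier ones, so it sees the
  original f below and the final rowmotion values above.\<close>
lemma rowmotion_step:
  assumes i: "i < length xs"
  defines "x \<equiv> xs ! i"
  shows "R x = Max (hatf f ` lower_covers x) + Min (hatf R ` upper_covers x) - f x"
proof -
  let ?F = "foldr (toggle P le) (drop (Suc i) xs) f"
  have R_split: "R = foldr (toggle P le) (take (Suc i) xs) ?F"
    unfolding pl_rowmotion_def by (metis append_take_drop_id foldr_append comp_apply)
  also have "take (Suc i) xs = take i xs @ [x]"
    using i x_def by (simp add: take_Suc_conv_app_nth)
  finally have "R x = toggle P le x ?F x"
    using foldr_toggle_other nth_notin_take[OF i, of i] x_def by simp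
  also have "\<dots> = Max (hatf ?F ` lower_covers x) + Min (hatf ?F ` upper_covers x) - ?F x"
    by (simp add: toggle_def lower_covers_def upper_covers_def image_Collect)
  also have "?F x = f x"
    using foldr_toggle_other nth_notin_drop[OF i, of "Suc i"] x_def by simp
  also have "hatf ?F ` lower_covers x = hatf f ` lower_covers x"
  proof (rule image_cong[OF refl])
    fix y assume y: "y \<in> lower_covers x"
    show "hatf ?F y = hatf f y"
    proof (cases y)
      case (El y0)
      then have "y0 \<notin> set (drop (Suc i) xs)"
        using y lower_cover_before[OF i] by (simp add: lower_covers_def x_def)
      then show ?thesis using El by (simp add: foldr_toggle_other)
    qed simp_all
  qed
  also have "hatf ?F ` upper_covers x = hatf R ` upper_covers x"
  proof (rule image_cong[OF refl])
    fix z assume z: "z \<in> upper_covers x"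
    show "hatf ?F z = hatf R z"
    proof (cases z)
      case (El z0)
      then have "z0 \<notin> set (take (Suc i) xs)"
        using z upper_cover_after[OF i] by (simp add: upper_covers_def x_def)
      then show ?thesis using El R_split by (simp add: foldr_toggle_other)
    qed simp_all
  qed
  finally show ?thesis .
qed

lemma rowmotion_eq: "x \<in> P \<Longrightarrow> R x = 1 - alpha3 P le g x"
proof (induction x rule: top_down_induct)
  case (step x)
  let ?A = "alpha3 P le g"
  obtain i where i: "i < length xs" "xs ! i = x" using step(1) set_xs by (metis in_set_conv_nth)
  have "hat0 ?A z = 1 - hatf R z" if "z \<in> upper_covers x" for z
    using that step(2) by (cases z) (auto simp: upper_covers_def hat_cov_def hat_lt_def)
  then have "Max (hat0 ?A ` upper_covers x) = 1 - Min (hatf R ` upper_covers x)"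
    using Max_const_minus[OF finite_upper_covers upper_covers_nonempty[OF step(1)]]
    by (simp cong: image_cong)
  then show ?case
    using rowmotion_step[OF i(1)] i(2) alpha3_rec[OF step(1), of g] alpha2_eq[OF step(1)] by simp
qed

end


theorem theorem2:
  fixes P :: "'a set" and le :: "'a \<Rightarrow> 'a \<Rightarrow> bool" and f :: "'a \<Rightarrow> real"
    and xs :: "'a list"
  assumes "finite_poset P le"
    and "linear_extension P le xs"
    and "f \<in> order_polytope P le"
  shows "alpha2 P le f \<in> chain_polytope P le
       \<and> alpha3 P le (alpha2 P le f) \<in> rev_order_polytope P le
       \<and> (\<forall>x\<in>P. pl_rowmotion P le xs f x = alpha1 (alpha3 P le (alpha2 P le f)) x)"
proof -
  interpret rowmotion P le f xs
    using assms by unfold_locales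
  have "alpha2 P le f \<in> chain_polytope P le" by (rule alpha2_chain_polytope)
  moreover then have "alpha3 P le (alpha2 P le f) \<in> rev_order_polytope P le"
    by (rule alpha3_rev_order)
  moreover have "\<forall>x\<in>P. pl_rowmotion P le xs f x = alpha1 (alpha3 P le (alpha2 P le f)) x"
    using rowmotion_eq by (simp add: alpha1_def)
  ultimately show ?thesis by blast
qed

end
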